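(* Let $X_0:=0$ and let $X_1,X_2,\dots$ be independent uniform random variables on $(0,1]$. For $m\ge1$ let $Z_m:=X_m-\max\{X_j:0\le j<m,\ X_j<X_m\}$. Then: (i) $Z_m$ has distribution function $F_m$ with $F_m(t)=0$ for $t<0$, $F_m(t)=1$ for $t>1$, and $F_m(t)=1-(1-t)^m$ for $0\le t\le1$. (ii) For $\alpha>0$, $$E[Z_m^\alpha]=\frac{m!\,\Gamma(1+\alpha)}{\Gamma(1+\alpha+m)},\qquad\mathrm{Var}[Z_m^\alpha]=\frac{m!\,\Gamma(1+2\alpha)}{\Gamma(1+2\alpha+m)}-\left(\frac{m!\,\Gamma(1+\alpha)}{\Gamma(1+\alpha+m)}\right)^2;$$ in particular $E[Z_m]=1/(m+1)$ and $\mathrm{Var}[Z_m]=m/((m+1)^2(m+2))$. (iii) For $\alpha>0$, as $m\to\infty$, $E[Z_m^\alpha]\sim\Gamma(\alpha+1)m^{-\alpha}$ and $\mathrm{Var}[Z_m^\alpha]\sim(\Gamma(2\alpha+1)-\Gamma(\alpha+1)^2)m^{-2\alpha}$. (iv) As $m\to\infty$, $mZ_m$ converges in distribution to an exponential random variable with parameter $1$. *)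

theory Defs
  imports "HOL-Probability.Probability" "HOL-Library.Landau_Symbols"
begin

text \<open>Z_m = X_m - max{X_j : 0 \<le> j < m, X_j < X_m}, with the convention X_0 = 0
  (the value 0 is always included in the set, standing for X_0).\<close>
definition gapZ :: "(nat \<Rightarrow> 'a \<Rightarrow> real) \<Rightarrow> nat \<Rightarrow> 'a \<Rightarrow> real" where
  "gapZ X m \<omega> = X m \<omega> - Max (insert 0 {X j \<omega> | j. 1 \<le> j \<and> j < m \<and> X j \<omega> < X m \<omega>})"

definition gapF :: "nat \<Rightarrow> real \<Rightarrow> real" where
  "gapF m t = (if t < 0 then 0 else if t > 1 then 1 else 1 - (1 - t) ^ m)"

end

theory Submission
  imports Defs
begin

text \<open>For \<open>0 \<le> t \<le> 1\<close> we have \<open>Z\<^sub>m > t\<close> exactly when \<open>X\<^sub>m > t\<close> and none of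
  \<open>X\<^sub>1, \<dots>, X\<^sub>m\<^sub>-\<^sub>1\<close> falls into the window \<open>[X\<^sub>m - t, X\<^sub>m)\<close>. Given \<open>X\<^sub>m = y > t\<close>,
  the earlier samples avoid this window independently, each with probability \<open>1 - t\<close>, so
  \<open>P(Z\<^sub>m > t) = (1 - t)\<^sup>m\<close>. Hence \<open>Z\<^sub>m\<close> has density \<open>m (1 - z)\<^sup>m\<^sup>-\<^sup>1\<close> on \<open>[0, 1]\<close>, its
  moments are the Beta integrals \<open>m B(1 + \<alpha>, m) = m! \<Gamma>(1 + \<alpha>) / \<Gamma>(1 + \<alpha> + m)\<close>, and their
  asymptotics follow from Euler's limit \<open>n! n\<^sup>\<alpha> / \<Gamma>(n + 1 + \<alpha>) \<longrightarrow> 1\<close>; the leading constant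
  of the variance is nonzero because \<open>\<Gamma>\<close> is strictly log-convex. Finally
  \<open>P(m Z\<^sub>m \<le> x) = 1 - (1 - x/m)\<^sup>m \<longrightarrow> 1 - e\<^sup>-\<^sup>x\<close>.\<close>

section \<open>The tail probability of the gap\<close>

definition gap_exceeds :: "nat \<Rightarrow> real \<Rightarrow> (nat \<Rightarrow> real) set" where
  "gap_exceeds m t = {x. t < x m \<and> (\<forall>j\<in>{1..<m}. x j \<notin> {x m - t..<x m})}"

lemma gapZ_greater_iff:
  assumes "1 \<le> m"
  shows "t < gapZ X m \<omega> \<longleftrightarrow> (\<lambda>i\<in>{1..m}. X i \<omega>) \<in> gap_exceeds m t"
proof -
  let ?S = "{X j \<omega> | j. 1 \<le> j \<and> j < m \<and> X j \<omega> < X m \<omega>}"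
  have S: "?S = (\<lambda>j. X j \<omega>) ` {j \<in> {1..<m}. X j \<omega> < X m \<omega>}"
    by auto
  have "t < gapZ X m \<omega> \<longleftrightarrow> Max (insert 0 ?S) < X m \<omega> - t"
    unfolding gapZ_def by linarith
  also have "\<dots> \<longleftrightarrow> t < X m \<omega> \<and> (\<forall>j\<in>{1..<m}. X j \<omega> < X m \<omega> \<longrightarrow> X j \<omega> < X m \<omega> - t)"
    unfolding S by auto
  also have "\<dots> \<longleftrightarrow> (\<lambda>i\<in>{1..m}. X i \<omega>) \<in> gap_exceeds m t"
    using assms by (auto simp: gap_exceeds_def)
  finally show ?thesis .
qed

lemma sets_gap_exceeds:
  assumes "1 \<le> m"
  shows "gap_exceeds m t \<inter> space (PiM {1..m} (\<lambda>_. borel))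
    \<in> sets (PiM {1..m} (\<lambda>_. borel :: real measure))"
proof -
  have coord: "(\<lambda>x. x i) \<in> borel_measurable (PiM {1..m} (\<lambda>_. borel :: real measure))"
    if "i \<in> {1..m}" for i
    using that by (rule measurable_component_singleton)
  have avoid: "(x j \<notin> {x m - t..<x m}) \<longleftrightarrow> x j < x m - t \<or> \<not> x j < x m" for x :: "nat \<Rightarrow> real" and j
    by auto
  have "Measurable.pred (PiM {1..m} (\<lambda>_. borel)) (\<lambda>x. x \<in> gap_exceeds m t)"
    unfolding gap_exceeds_def mem_Collect_eq avoid using assms
    by (intro pred_intros_logic pred_intros_finite borel_measurable_pred_less borel_measurable_diff
        borel_measurable_const coord) auto
  then show ?thesis
    unfolding Measurable.pred_def by (simp add: Int_def conj_commute)
qed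

abbreviation unif01 :: "real measure" where
  "unif01 \<equiv> uniform_measure lborel {0<..1}"

lemma prob_space_unif01: "prob_space unif01"
  by (rule prob_space_uniform_measure) auto

lemma emeasure_unif01_avoid_window:
  assumes "0 \<le> t" "t < y" "y \<le> 1"
  shows "emeasure unif01 (- {y - t..<y}) = ennreal (1 - t)"
proof -
  have "emeasure unif01 (- {y - t..<y}) = emeasure lborel ({0<..1} - {y - t..<y})"
    by (simp add: Diff_eq divide_ennreal_def)
  also have "\<dots> = emeasure lborel {0<..1::real} - emeasure lborel {y - t..<y}"
    using assms by (intro emeasure_Diff) auto
  also have "\<dots> = ennreal (1 - t)"
    using assms ennreal_minus[of t 1] by simp
  finally show ?thesis .
qed

lemma emeasure_PiM_unif01_avoid_window:
  assumes "finite I" "0 \<le> t" "t < y" "y \<le> 1"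
  shows "emeasure (PiM I (\<lambda>_. unif01)) (PiE I (\<lambda>_. - {y - t..<y})) = ennreal ((1 - t) ^ card I)"
proof -
  interpret product_sigma_finite "\<lambda>_ :: 'i. unif01"
    by (simp add: product_sigma_finite_def prob_space_imp_sigma_finite prob_space_unif01)
  have "emeasure (PiM I (\<lambda>_. unif01)) (PiE I (\<lambda>_. - {y - t..<y}))
      = (\<Prod>i\<in>I. emeasure unif01 (- {y - t..<y}))"
    using assms(1) by (rule emeasure_PiM) simp
  also have "\<dots> = ennreal ((1 - t) ^ card I)"
    unfolding emeasure_unif01_avoid_window[OF assms(2-4)] prod_constant
    using assms by (simp add: ennreal_power)
  finally show ?thesis .
qed

lemma emeasure_unif01_greater:
  assumes "0 \<le> t" "t \<le> 1"
  shows "emeasure unif01 {t<..} = ennreal (1 - t)"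
proof -
  have "{0<..1} \<inter> {t<..} = {t<..1::real}"
    using assms by auto
  then show ?thesis
    using assms by (simp add: divide_ennreal_def)
qed

lemma fun_upd_mem_gap_exceeds_iff:
  assumes "1 \<le> m" "x \<in> PiE {1..<m} (\<lambda>_. UNIV)"
  shows "x(m := y) \<in> gap_exceeds m t \<inter> PiE {1..m} (\<lambda>_. UNIV)
    \<longleftrightarrow> t < y \<and> x \<in> PiE {1..<m} (\<lambda>_. - {y - t..<y})"
  using assms by (auto simp: gap_exceeds_def PiE_def extensional_def)

lemma emeasure_PiM_unif01_gap_exceeds:
  assumes m: "1 \<le> m" and t: "0 \<le> t" "t \<le> 1"
  shows "emeasure (PiM {1..m} (\<lambda>_. unif01)) (gap_exceeds m t \<inter> space (PiM {1..m} (\<lambda>_. unif01)))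
    = ennreal ((1 - t) ^ m)"
proof -
  interpret product_prob_space "\<lambda>_ :: nat. unif01" "{}"
    by (simp add: product_prob_space_def product_prob_space_axioms_def product_sigma_finite_def
        prob_space_imp_sigma_finite prob_space_unif01)
  let ?I = "{1..<m}"
  let ?P = "PiM ?I (\<lambda>_. unif01)"
  let ?E = "gap_exceeds m t \<inter> space (PiM {1..m} (\<lambda>_. unif01))"
  let ?A = "\<lambda>y. PiE ?I (\<lambda>_. - {y - t..<y})"
  have I: "{1..m} = insert m ?I"
    using m by auto
  have "sets (PiM {1..m} (\<lambda>_. unif01)) = sets (PiM {1..m} (\<lambda>_. borel :: real measure))"
    by (intro sets_PiM_cong) auto
  then have E: "?E \<in> sets (PiM (insert m ?I) (\<lambda>_. unif01))"
    using sets_gap_exceeds[OF m, of t] unfolding I by (simp add: space_PiM)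
  have slice: "(\<integral>\<^sup>+ x. indicator ?E (x(m := y)) \<partial>?P) = indicator {t<..} y * emeasure ?P (?A y)"
    for y
  proof -
    have "indicator ?E (x(m := y)) = (indicator {t<..} y * indicator (?A y) x :: ennreal)"
      if "x \<in> space ?P" for x
      using fun_upd_mem_gap_exceeds_iff[OF m, of x y t] that by (simp add: space_PiM indicator_def)
    then have "(\<integral>\<^sup>+ x. indicator ?E (x(m := y)) \<partial>?P)
        = (\<integral>\<^sup>+ x. indicator {t<..} y * indicator (?A y) x \<partial>?P)"
      by (intro nn_integral_cong) simp
    also have "\<dots> = indicator {t<..} y * emeasure ?P (?A y)"
      by (intro nn_integral_cmult_indicator sets_PiM_I_finite) auto
    finally show ?thesis .
  qed
  have "emeasure (PiM (insert m ?I) (\<lambda>_. unif01)) ?E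
      = (\<integral>\<^sup>+ y. (\<integral>\<^sup>+ x. indicator ?E (x(m := y)) \<partial>?P) \<partial>unif01)"
    using E by (simp flip: nn_integral_indicator add: product_nn_integral_insert_rev)
  also have "\<dots> = (\<integral>\<^sup>+ y. ennreal ((1 - t) ^ (m - 1)) * indicator {t<..} y \<partial>unif01)"
    unfolding slice using t
    by (intro nn_integral_cong_AE AE_uniform_measureI)
      (auto simp: indicator_def emeasure_PiM_unif01_avoid_window)
  also have "\<dots> = ennreal ((1 - t) ^ (m - 1)) * emeasure unif01 {t<..}"
    by (rule nn_integral_cmult_indicator) simp
  also have "\<dots> = ennreal ((1 - t) ^ (m - 1)) * ennreal (1 - t)"
    unfolding emeasure_unif01_greater[OF t] ..
  also have "\<dots> = ennreal ((1 - t) ^ (m - 1) * (1 - t))"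
    using t by (intro ennreal_mult[symmetric]) auto
  also have "\<dots> = ennreal ((1 - t) ^ m)"
    using m by (subst power_minus_mult) auto
  finally show ?thesis
    unfolding I .
qed

lemma cdf_eq_gapF:
  assumes N: "real_distribution N" and m: "1 \<le> m"
    and cdf_01: "\<And>t. 0 \<le> t \<Longrightarrow> t \<le> 1 \<Longrightarrow> cdf N t = 1 - (1 - t) ^ m"
  shows "cdf N t = gapF m t"
proof -
  interpret real_distribution N by fact
  consider "t < 0" | "1 < t" | "0 \<le> t \<and> t \<le> 1" by linarith
  then show ?thesis
  proof cases
    case 1
    then have "cdf N t \<le> cdf N 0" by (intro cdf_nondecreasing) auto
    then show ?thesis using 1 cdf_01[of 0] cdf_nonneg[of t] by (simp add: gapF_def)
  next
    case 2
    then have "cdf N 1 \<le> cdf N t" by (intro cdf_nondecreasing) auto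
    then show ?thesis
      using 2 m cdf_01[of 1] cdf_bounded_prob[of t] by (simp add: gapF_def zero_power)
  qed (simp add: cdf_01 gapF_def)
qed

locale iid_unif01 = prob_space +
  fixes X :: "nat \<Rightarrow> 'a \<Rightarrow> real"
  assumes indep: "indep_vars (\<lambda>_. borel) X {1..}"
    and distr_X: "\<And>i. 1 \<le> i \<Longrightarrow> distr M lborel (X i) = unif01"
begin

lemma random_variable_X: "1 \<le> i \<Longrightarrow> random_variable borel (X i)"
  using indep by (auto simp: indep_vars_def)

lemma measurable_samples: "(\<lambda>\<omega>. \<lambda>i\<in>{1..m}. X i \<omega>) \<in> measurable M (PiM {1..m} (\<lambda>_. borel))"
  by (intro measurable_restrict random_variable_X) auto

lemma distr_samples:
  assumes "1 \<le> m"
  shows "distr M (PiM {1..m} (\<lambda>_. borel)) (\<lambda>\<omega>. \<lambda>i\<in>{1..m}. X i \<omega>) = PiM {1..m} (\<lambda>_. unif01)"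
proof -
  have "indep_vars (\<lambda>_. borel) X {1..m}"
    by (rule indep_vars_subset[OF indep]) auto
  then have "distr M (PiM {1..m} (\<lambda>_. borel)) (\<lambda>\<omega>. \<lambda>i\<in>{1..m}. X i \<omega>)
      = PiM {1..m} (\<lambda>i. distr M borel (X i))"
    using assms by (subst (asm) indep_vars_iff_distr_eq_PiM') (auto intro: random_variable_X)
  also have "\<dots> = PiM {1..m} (\<lambda>_. unif01)"
  proof (rule PiM_cong)
    fix i assume "i \<in> {1..m}"
    then show "distr M borel (X i) = unif01"
      using distr_X[of i] distr_cong[of M M borel lborel "X i" "X i"] by simp
  qed simp
  finally show ?thesis .
qed

lemma gapZ_greater_eq_preimage:
  assumes "1 \<le> m"
  shows "{\<omega> \<in> space M. t < gapZ X m \<omega>}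
    = (\<lambda>\<omega>. \<lambda>i\<in>{1..m}. X i \<omega>) -` (gap_exceeds m t \<inter> space (PiM {1..m} (\<lambda>_. borel))) \<inter> space M"
  using assms by (auto simp: gapZ_greater_iff space_PiM)

lemma borel_measurable_gapZ:
  assumes "1 \<le> m"
  shows "random_variable borel (gapZ X m)"
proof (subst borel_measurable_iff_greater, intro allI)
  fix t
  show "{\<omega> \<in> space M. t < gapZ X m \<omega>} \<in> events"
    unfolding gapZ_greater_eq_preimage[OF assms]
    using measurable_samples sets_gap_exceeds[OF assms] by (rule measurable_sets)
qed

lemma prob_gapZ_greater:
  assumes m: "1 \<le> m" and t: "0 \<le> t" "t \<le> 1"
  shows "prob {\<omega> \<in> space M. t < gapZ X m \<omega>} = (1 - t) ^ m"
proof -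
  have "emeasure M {\<omega> \<in> space M. t < gapZ X m \<omega>}
      = emeasure (distr M (PiM {1..m} (\<lambda>_. borel)) (\<lambda>\<omega>. \<lambda>i\<in>{1..m}. X i \<omega>))
          (gap_exceeds m t \<inter> space (PiM {1..m} (\<lambda>_. borel)))"
    unfolding gapZ_greater_eq_preimage[OF m]
    by (rule emeasure_distr[symmetric, OF measurable_samples sets_gap_exceeds[OF m]])
  also have "\<dots> = ennreal ((1 - t) ^ m)"
    unfolding distr_samples[OF m] using emeasure_PiM_unif01_gap_exceeds[OF m t]
    by (simp add: space_PiM)
  finally show ?thesis
    using t by (simp add: emeasure_eq_measure)
qed

lemma cdf_gapZ:
  assumes m: "1 \<le> m"
  shows "cdf (distr M borel (gapZ X m)) t = gapF m t"
proof (rule cdf_eq_gapF[OF _ m])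
  show "real_distribution (distr M borel (gapZ X m))"
    using borel_measurable_gapZ[OF m] by simp
  fix t :: real assume t: "0 \<le> t" "t \<le> 1"
  have "cdf (distr M borel (gapZ X m)) t = prob (gapZ X m -` {..t} \<inter> space M)"
    using borel_measurable_gapZ[OF m] by (simp add: cdf_def measure_distr)
  also have "gapZ X m -` {..t} \<inter> space M = space M - {\<omega> \<in> space M. t < gapZ X m \<omega>}"
    by auto
  also have "prob \<dots> = 1 - (1 - t) ^ m"
    using borel_measurable_gapZ[OF m] prob_gapZ_greater[OF m t] by (subst prob_compl) auto
  finally show "cdf (distr M borel (gapZ X m)) t = 1 - (1 - t) ^ m" .
qed

end

section \<open>The density of the gap\<close>

definition gap_density :: "nat \<Rightarrow> real \<Rightarrow> real" where
  "gap_density m z = (if z \<in> {0..1} then real m * (1 - z) ^ (m - 1) else 0)"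

lemma gap_density_nonneg: "0 \<le> gap_density m z"
  by (simp add: gap_density_def)

lemma borel_measurable_gap_density [measurable]: "gap_density m \<in> borel_measurable borel"
  unfolding gap_density_def by measurable

lemma nn_integral_gap_density_atMost:
  assumes m: "1 \<le> m" and t: "0 \<le> t" "t \<le> 1"
  shows "(\<integral>\<^sup>+ z. ennreal (gap_density m z) * indicator {..t} z \<partial>lborel) = ennreal (1 - (1 - t) ^ m)"
proof -
  let ?f = "\<lambda>z. if z \<in> {0..t} then real m * (1 - z) ^ (m - 1) else 0"
  have "((\<lambda>z. - ((1 - z) ^ m)) has_real_derivative real m * (1 - z) ^ (m - 1)) (at z within {0..t})"
    for z :: real
    by (auto intro!: derivative_eq_intros)
  then have "((\<lambda>z. real m * (1 - z) ^ (m - 1)) has_integral - ((1 - t) ^ m) - - ((1 - 0) ^ m)) {0..t}"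
    using t by (intro fundamental_theorem_of_calculus)
      (auto simp: has_real_derivative_iff_has_vector_derivative)
  then have "(?f has_integral 1 - (1 - t) ^ m) UNIV"
    by (subst has_integral_restrict_UNIV) simp
  then have "(\<integral>\<^sup>+ z. ?f z \<partial>lborel) = ennreal (1 - (1 - t) ^ m)"
    using t by (intro nn_integral_has_integral_lborel) auto
  moreover have "(\<integral>\<^sup>+ z. ennreal (gap_density m z) * indicator {..t} z \<partial>lborel)
      = (\<integral>\<^sup>+ z. ?f z \<partial>lborel)"
    using t by (intro nn_integral_cong) (auto simp: gap_density_def indicator_def)
  ultimately show ?thesis
    by simp
qed

lemma real_distribution_gap_density:
  assumes "1 \<le> m"
  shows "real_distribution (density lborel (gap_density m))"
proof -
  have "(\<integral>\<^sup>+ z. gap_density m z \<partial>lborel)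
      = (\<integral>\<^sup>+ z. ennreal (gap_density m z) * indicator {..1} z \<partial>lborel)"
    by (intro nn_integral_cong) (auto simp: gap_density_def indicator_def)
  also have "\<dots> = 1"
    using nn_integral_gap_density_atMost[OF assms, of 1] assms by (simp add: zero_power)
  finally have "prob_space (density lborel (gap_density m))"
    by (intro prob_spaceI) (simp add: emeasure_density)
  then show ?thesis
    by (simp add: real_distribution_def real_distribution_axioms_def)
qed

lemma cdf_gap_density:
  assumes m: "1 \<le> m"
  shows "cdf (density lborel (gap_density m)) t = gapF m t"
proof (rule cdf_eq_gapF[OF real_distribution_gap_density[OF m] m])
  fix t :: real assume t: "0 \<le> t" "t \<le> 1"
  have "emeasure (density lborel (gap_density m)) {..t}
      = (\<integral>\<^sup>+ z. ennreal (gap_density m z) * indicator {..t} z \<partial>lborel)"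
    by (rule emeasure_density) auto
  also have "\<dots> = ennreal (1 - (1 - t) ^ m)"
    by (rule nn_integral_gap_density_atMost[OF m t])
  finally have "emeasure (density lborel (gap_density m)) {..t} = ennreal (1 - (1 - t) ^ m)" .
  moreover have "0 \<le> 1 - (1 - t) ^ m"
    using t by (simp add: power_le_one)
  ultimately show "cdf (density lborel (gap_density m)) t = 1 - (1 - t) ^ m"
    by (simp add: cdf_def measure_def)
qed

section \<open>Moments\<close>

definition gap_moment :: "real \<Rightarrow> nat \<Rightarrow> real" where
  "gap_moment a m = fact m * Gamma (1 + a) / Gamma (1 + a + real m)"

lemma gap_moment_nonneg: "-1 < a \<Longrightarrow> 0 \<le> gap_moment a m"
  unfolding gap_moment_def by (intro divide_nonneg_pos mult_nonneg_nonneg) auto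

lemma gap_moment_eq_Beta:
  assumes "1 \<le> m"
  shows "gap_moment a m = real m * Beta (a + 1) (real m)"
proof -
  have "Gamma (real m) = fact (m - 1)"
    using Gamma_fact[of "m - 1", where 'a = real] assms by (simp add: of_nat_diff)
  moreover have "fact m = real m * fact (m - 1)"
    using fact_reduce[of m] assms by simp
  ultimately show ?thesis
    by (simp add: gap_moment_def Beta_def ac_simps)
qed

lemma gap_moment_of_nat: "gap_moment (real k) m = fact m * fact k / fact (k + m)"
  using Gamma_fact[of k, where 'a = real] Gamma_fact[of "k + m", where 'a = real]
  by (simp add: gap_moment_def add.assoc)

lemma gap_moment_1: "gap_moment 1 m = 1 / (real m + 1)"
  using gap_moment_of_nat[of 1 m] by (simp add: fact_Suc)

lemma gap_moment_2: "gap_moment 2 m = 2 / ((real m + 1) * (real m + 2))"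
proof -
  have "fact (2 + m) = (real m + 1) * (real m + 2) * (fact m :: real)"
    by (simp add: fact_Suc numeral_2_eq_2 algebra_simps)
  then show ?thesis
    using gap_moment_of_nat[of 2 m] by simp
qed

lemma has_integral_gap_density_powr:
  assumes m: "1 \<le> m" and a: "-1 < a"
  shows "((\<lambda>z. gap_density m z * z powr a) has_integral gap_moment a m) UNIV"
proof -
  have Beta: "((\<lambda>z. real m * (z powr (a + 1 - 1) * (1 - z) powr (real m - 1)))
      has_integral gap_moment a m) {0..1}"
    unfolding gap_moment_eq_Beta[OF m] using m a
    by (intro has_integral_mult_right has_integral_Beta_real) auto
  have "((\<lambda>z. real m * (1 - z) ^ (m - 1) * z powr a) has_integral gap_moment a m) {0..1}"
  proof (rule has_integral_spike_finite[OF _ _ Beta])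
    fix z :: real assume "z \<in> {0..1} - {1}"
    then have "0 < 1 - z"
      by simp
    have "(1 - z) powr (real m - 1) = (1 - z) powr real (m - 1)"
      using m by (simp add: of_nat_diff)
    also have "\<dots> = (1 - z) ^ (m - 1)"
      using \<open>0 < 1 - z\<close> by (rule powr_realpow)
    finally have "(1 - z) powr (real m - 1) = (1 - z) ^ (m - 1)" .
    then show "real m * (1 - z) ^ (m - 1) * z powr a
        = real m * (z powr (a + 1 - 1) * (1 - z) powr (real m - 1))"
      by simp
  qed simp
  then have "((\<lambda>z. if z \<in> {0..1} then real m * (1 - z) ^ (m - 1) * z powr a else 0)
      has_integral gap_moment a m) UNIV"
    by (subst has_integral_restrict_UNIV)
  moreover have "(\<lambda>z. gap_density m z * z powr a)
      = (\<lambda>z. if z \<in> {0..1} then real m * (1 - z) ^ (m - 1) * z powr a else 0)"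
    by (simp add: gap_density_def fun_eq_iff)
  ultimately show ?thesis
    by simp
qed

context iid_unif01
begin

lemma distr_gapZ:
  assumes "1 \<le> m"
  shows "distr M borel (gapZ X m) = density lborel (gap_density m)"
proof (rule cdf_unique)
  show "real_distribution (distr M borel (gapZ X m))"
    using borel_measurable_gapZ[OF assms] by simp
  show "real_distribution (density lborel (gap_density m))"
    using assms by (rule real_distribution_gap_density)
  show "cdf (distr M borel (gapZ X m)) = cdf (density lborel (gap_density m))"
    using assms by (simp add: fun_eq_iff cdf_gapZ cdf_gap_density)
qed

lemma has_bochner_integral_gapZ_powr:
  assumes m: "1 \<le> m" and a: "-1 < a"
  shows "has_bochner_integral M (\<lambda>\<omega>. gapZ X m \<omega> powr a) (gap_moment a m)"
proof (rule has_bochner_integral_nn_integral)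
  note [measurable] = borel_measurable_gapZ[OF m]
  show "(\<lambda>\<omega>. gapZ X m \<omega> powr a) \<in> borel_measurable M"
    by measurable
  have "(\<integral>\<^sup>+ \<omega>. gapZ X m \<omega> powr a \<partial>M) = (\<integral>\<^sup>+ z. z powr a \<partial>distr M borel (gapZ X m))"
    by (simp add: nn_integral_distr)
  also have "\<dots> = (\<integral>\<^sup>+ z. z powr a \<partial>density lborel (gap_density m))"
    unfolding distr_gapZ[OF m] ..
  also have "\<dots> = (\<integral>\<^sup>+ z. gap_density m z * z powr a \<partial>lborel)"
    by (subst nn_integral_density)
      (auto intro!: nn_integral_cong ennreal_mult[symmetric] gap_density_nonneg)
  also have "\<dots> = gap_moment a m"
    using has_integral_gap_density_powr[OF m a]
    by (intro nn_integral_has_integral_lborel) (auto simp: gap_density_nonneg)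
  finally show "(\<integral>\<^sup>+ \<omega>. gapZ X m \<omega> powr a \<partial>M) = gap_moment a m" .
  show "AE \<omega> in M. 0 \<le> gapZ X m \<omega> powr a"
    by simp
  show "0 \<le> gap_moment a m"
    using a by (rule gap_moment_nonneg)
qed

lemma expectation_gapZ_powr: "1 \<le> m \<Longrightarrow> -1 < a \<Longrightarrow> expectation (\<lambda>\<omega>. gapZ X m \<omega> powr a) = gap_moment a m"
  by (rule has_bochner_integral_integral_eq[OF has_bochner_integral_gapZ_powr])

lemma variance_gapZ_powr:
  assumes m: "1 \<le> m" and a: "-1/2 < a"
  shows "variance (\<lambda>\<omega>. gapZ X m \<omega> powr a) = gap_moment (2 * a) m - (gap_moment a m)\<^sup>2"
proof -
  have sq: "(z powr a)\<^sup>2 = z powr (2 * a)" for z :: real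
    unfolding power2_eq_square mult_2 by (rule powr_add[symmetric])
  have a1: "-1 < a" and a2: "-1 < 2 * a"
    using a by linarith+
  have "integrable M (\<lambda>\<omega>. gapZ X m \<omega> powr a)"
    using has_bochner_integral_gapZ_powr[OF m a1] by (rule integrable.intros)
  moreover have "integrable M (\<lambda>\<omega>. (gapZ X m \<omega> powr a)\<^sup>2)"
    unfolding sq using has_bochner_integral_gapZ_powr[OF m a2] by (rule integrable.intros)
  ultimately have "variance (\<lambda>\<omega>. gapZ X m \<omega> powr a)
      = expectation (\<lambda>\<omega>. (gapZ X m \<omega> powr a)\<^sup>2) - (expectation (\<lambda>\<omega>. gapZ X m \<omega> powr a))\<^sup>2"
    by (rule variance_eq)
  then show ?thesis
    unfolding sq expectation_gapZ_powr[OF m a1] expectation_gapZ_powr[OF m a2] .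
qed

lemma AE_gapZ_pos:
  assumes "1 \<le> m"
  shows "AE \<omega> in M. 0 < gapZ X m \<omega>"
proof -
  have "prob {\<omega> \<in> space M. 0 < gapZ X m \<omega>} = 1"
    using prob_gapZ_greater[OF assms, of 0] by simp
  then show ?thesis
    by (rule AE_prob_1[THEN AE_mp]) simp
qed

lemma has_bochner_integral_gapZ_power:
  assumes m: "1 \<le> m"
  shows "has_bochner_integral M (\<lambda>\<omega>. gapZ X m \<omega> ^ k) (gap_moment (real k) m)"
proof -
  note [measurable] = borel_measurable_gapZ[OF m]
  have "AE \<omega> in M. gapZ X m \<omega> powr real k = gapZ X m \<omega> ^ k"
    using AE_gapZ_pos[OF m] by eventually_elim (rule powr_realpow)
  then have "has_bochner_integral M (\<lambda>\<omega>. gapZ X m \<omega> powr real k) (gap_moment (real k) m)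
      = has_bochner_integral M (\<lambda>\<omega>. gapZ X m \<omega> ^ k) (gap_moment (real k) m)"
    by (intro has_bochner_integral_cong_AE) measurable
  moreover have "-1 < real k"
    by simp
  ultimately show ?thesis
    using has_bochner_integral_gapZ_powr[OF m] by blast
qed

lemma expectation_gapZ:
  assumes m: "1 \<le> m"
  shows "expectation (gapZ X m) = 1 / (real m + 1)"
  using has_bochner_integral_integral_eq[OF has_bochner_integral_gapZ_power[OF m, of 1]]
  by (simp add: gap_moment_1)

lemma variance_gapZ:
  assumes m: "1 \<le> m"
  shows "variance (gapZ X m) = real m / ((real m + 1)\<^sup>2 * (real m + 2))"
proof -
  have Z: "has_bochner_integral M (gapZ X m) (gap_moment 1 m)"
    using has_bochner_integral_gapZ_power[OF m, of 1] by simp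
  have Z2: "has_bochner_integral M (\<lambda>\<omega>. (gapZ X m \<omega>)\<^sup>2) (gap_moment 2 m)"
    using has_bochner_integral_gapZ_power[OF m, of 2] by simp
  have "variance (gapZ X m) = expectation (\<lambda>\<omega>. (gapZ X m \<omega>)\<^sup>2) - (expectation (gapZ X m))\<^sup>2"
    using Z Z2 by (intro variance_eq integrable.intros)
  also have "\<dots> = 2 / ((real m + 1) * (real m + 2)) - (1 / (real m + 1))\<^sup>2"
    using Z Z2 by (simp add: has_bochner_integral_integral_eq gap_moment_1 gap_moment_2)
  also have "\<dots> = real m / ((real m + 1)\<^sup>2 * (real m + 2))"
  proof -
    have "2 / ((x + 1) * (x + 2)) - (1 / (x + 1))\<^sup>2 = x / ((x + 1)\<^sup>2 * (x + 2))"
      if "0 \<le> x" for x :: real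
    proof -
      from that have "x + 1 \<noteq> 0" "x + 2 \<noteq> 0"
        by linarith+
      then show ?thesis
        by (simp add: divide_simps power2_eq_square)
    qed
    then show ?thesis
      by simp
  qed
  finally show ?thesis .
qed

end

section \<open>Asymptotics of the moments\<close>

text \<open>Euler's product formula \<^const>\<open>Gamma_series\<close>, rescaled by \<open>pochhammer_Gamma\<close>.\<close>

lemma fact_powr_div_Gamma_tendsto:
  fixes a :: real
  assumes a: "a \<notin> \<int>\<^sub>\<le>\<^sub>0"
  shows "(\<lambda>n. fact n * real n powr a / Gamma (1 + a + real n)) \<longlonglongrightarrow> 1"
proof -
  have Gamma_a: "Gamma a \<noteq> 0"
    using a by (simp add: Gamma_eq_zero_iff)
  have "(\<lambda>n. Gamma_series a n / Gamma a) \<longlonglongrightarrow> Gamma a / Gamma a"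
    by (intro tendsto_divide Gamma_series_LIMSEQ tendsto_const Gamma_a)
  moreover have "eventually (\<lambda>n. Gamma_series a n / Gamma a
      = fact n * real n powr a / Gamma (1 + a + real n)) sequentially"
    using eventually_gt_at_top[of "0::nat"]
  proof eventually_elim
    case (elim n)
    have "pochhammer a (n + 1) * Gamma a = Gamma (1 + a + real n)"
      using pochhammer_Gamma[OF a, of "n + 1"] Gamma_a by (simp add: ac_simps)
    then show ?case
      using elim Gamma_a by (simp add: Gamma_series_def powr_def field_simps)
  qed
  ultimately show ?thesis
    using Gamma_a by (simp add: Lim_transform_eventually)
qed

lemma asymp_equiv_powr_of_tendsto:
  fixes f g :: "nat \<Rightarrow> real"
  assumes "(f \<longlongrightarrow> c) at_top" "c \<noteq> 0" "eventually (\<lambda>n. g n = f n * real n powr b) at_top"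
  shows "g \<sim>[at_top] (\<lambda>n. c * real n powr b)"
proof -
  have "(\<lambda>n. f n * real n powr b) \<sim>[at_top] (\<lambda>n. c * real n powr b)"
    using assms(1,2) by (intro asymp_equiv_mult tendsto_imp_asymp_equiv_const asymp_equiv_refl)
  then show ?thesis
    by (rule asymp_equiv_transfer) (use assms(3) in \<open>auto elim: eventually_mono\<close>)
qed

text \<open>Strict log-convexity of \<open>\<Gamma>\<close>; it makes the leading constant of the variance nonzero.\<close>

lemma Gamma_sq_less_mult:
  fixes x h :: real
  assumes x: "0 < x" and h: "0 < h"
  shows "(Gamma (x + h))\<^sup>2 < Gamma x * Gamma (x + 2 * h)"
proof -
  have der: "\<forall>y. x \<le> y \<and> y \<le> x + 2 * h \<longrightarrow> DERIV ln_Gamma y :> Digamma y"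
    using x by (auto intro: has_field_derivative_ln_Gamma_real)
  obtain z1 where z1: "x < z1" "z1 < x + h" "ln_Gamma (x + h) - ln_Gamma x = h * Digamma z1"
    using MVT2[of x "x + h" ln_Gamma Digamma] der h by auto
  obtain z2 where z2: "x + h < z2" "z2 < x + 2 * h"
    "ln_Gamma (x + 2 * h) - ln_Gamma (x + h) = h * Digamma z2"
    using MVT2[of "x + h" "x + 2 * h" ln_Gamma Digamma] der x h by auto
  have "Digamma z1 < Digamma z2"
    using x z1 z2 by (intro Digamma_real_strict_mono) auto
  then have "h * Digamma z1 < h * Digamma z2"
    using h by simp
  then have "2 * ln_Gamma (x + h) < ln_Gamma x + ln_Gamma (x + 2 * h)"
    using z1(3) z2(3) by linarith
  then have "2 * ln (Gamma (x + h)) < ln (Gamma x) + ln (Gamma (x + 2 * h))"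
    using x h by (simp add: ln_Gamma_real_pos)
  moreover have pos: "0 < Gamma x" "0 < Gamma (x + h)" "0 < Gamma (x + 2 * h)"
    using x h by (simp_all add: Gamma_real_pos)
  ultimately have "ln ((Gamma (x + h))\<^sup>2) < ln (Gamma x * Gamma (x + 2 * h))"
    by (simp add: ln_realpow ln_mult)
  then show ?thesis
    using pos by simp
qed

lemma gap_moment_eq_ratio:
  assumes "0 < n"
  shows "gap_moment b n
    = Gamma (1 + b) * (fact n * real n powr b / Gamma (1 + b + real n)) * real n powr (- b)"
  using assms by (simp add: gap_moment_def powr_minus field_simps)

lemma gap_moment_asymp_equiv:
  assumes a: "0 < a"
  shows "gap_moment a \<sim>[at_top] (\<lambda>m. Gamma (a + 1) * real m powr (- a))"
proof (rule asymp_equiv_powr_of_tendsto)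
  let ?r = "\<lambda>n. fact n * real n powr a / Gamma (1 + a + real n)"
  have "a \<notin> \<int>\<^sub>\<le>\<^sub>0"
    using a by (auto elim: nonpos_Ints_cases)
  then have "((\<lambda>n. Gamma (1 + a) * ?r n) \<longlongrightarrow> Gamma (1 + a) * 1) at_top"
    by (intro tendsto_mult tendsto_const fact_powr_div_Gamma_tendsto)
  then show "((\<lambda>n. Gamma (1 + a) * ?r n) \<longlongrightarrow> Gamma (a + 1)) at_top"
    by (simp add: add.commute)
  show "Gamma (a + 1) \<noteq> 0"
    using a by (auto simp: Gamma_eq_zero_iff elim!: nonpos_Ints_cases)
  show "eventually (\<lambda>n. gap_moment a n = Gamma (1 + a) * ?r n * real n powr (- a)) at_top"
    using eventually_gt_at_top[of "0::nat"] by eventually_elim (rule gap_moment_eq_ratio)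
qed

lemma gap_moment_variance_asymp_equiv:
  assumes a: "0 < a"
  shows "(\<lambda>m. gap_moment (2 * a) m - (gap_moment a m)\<^sup>2)
    \<sim>[at_top] (\<lambda>m. (Gamma (2 * a + 1) - (Gamma (a + 1))\<^sup>2) * real m powr (- 2 * a))"
proof (rule asymp_equiv_powr_of_tendsto)
  let ?r = "\<lambda>b n. fact n * real n powr b / Gamma (1 + b + real n)"
  have "a \<notin> \<int>\<^sub>\<le>\<^sub>0" "2 * a \<notin> \<int>\<^sub>\<le>\<^sub>0"
    using a by (auto elim: nonpos_Ints_cases)
  then have "((\<lambda>n. Gamma (1 + 2 * a) * ?r (2 * a) n - (Gamma (1 + a))\<^sup>2 * (?r a n)\<^sup>2)
      \<longlongrightarrow> Gamma (1 + 2 * a) * 1 - (Gamma (1 + a))\<^sup>2 * 1\<^sup>2) at_top"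
    by (intro tendsto_intros fact_powr_div_Gamma_tendsto)
  then show "((\<lambda>n. Gamma (1 + 2 * a) * ?r (2 * a) n - (Gamma (1 + a))\<^sup>2 * (?r a n)\<^sup>2)
      \<longlongrightarrow> Gamma (2 * a + 1) - (Gamma (a + 1))\<^sup>2) at_top"
    by (simp add: add.commute)
  show "Gamma (2 * a + 1) - (Gamma (a + 1))\<^sup>2 \<noteq> 0"
    using Gamma_sq_less_mult[of 1 a] a by (simp add: add.commute)
  show "eventually (\<lambda>n. gap_moment (2 * a) n - (gap_moment a n)\<^sup>2
      = (Gamma (1 + 2 * a) * ?r (2 * a) n - (Gamma (1 + a))\<^sup>2 * (?r a n)\<^sup>2)
        * real n powr (- 2 * a)) at_top"
    using eventually_gt_at_top[of "0::nat"]
  proof eventually_elim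
    case (elim n)
    have p: "(real n powr (- a))\<^sup>2 = real n powr (- (2 * a))"
      unfolding power2_eq_square powr_add[symmetric] by simp
    have q: "- 2 * a = - (2 * a)"
      by simp
    show ?case
      unfolding gap_moment_eq_ratio[OF elim] q power_mult_distrib p by (simp add: algebra_simps)
  qed
qed

section \<open>Convergence to the exponential law\<close>

lemma cdf_exponential_density:
  assumes "0 < l"
  shows "cdf (density lborel (\<lambda>x. ennreal (exponential_density l x))) x
    = (if 0 \<le> x then 1 - exp (- l * x) else 0)"
  using emeasure_erlang_density[OF assms, of 0 x] assms
  by (simp add: cdf_def measure_def erlang_CDF_0)

lemma gapF_scaled_tendsto:
  "(\<lambda>n. gapF n (x / real n)) \<longlonglongrightarrow> (if 0 \<le> x then 1 - exp (- x) else 0)"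
proof (cases "0 \<le> x")
  case True
  have "(\<lambda>n. 1 - (1 + (- x) / real n) ^ n) \<longlonglongrightarrow> 1 - exp (- x)"
    by (intro tendsto_diff tendsto_const tendsto_exp_limit_sequentially)
  moreover have "eventually (\<lambda>n. 1 - (1 + (- x) / real n) ^ n = gapF n (x / real n)) sequentially"
    using eventually_ge_at_top[of "nat \<lceil>x\<rceil> + 1"]
  proof eventually_elim
    case (elim n)
    then have "x / real n \<le> 1" "0 < real n"
      by (auto simp: divide_le_eq) linarith+
    moreover have "0 \<le> x / real n"
      using True by simp
    ultimately show ?case
      using True by (simp add: gapF_def diff_divide_distrib divide_less_0_iff)
  qed
  ultimately show ?thesis
    using True by (simp add: Lim_transform_eventually)
next
  case False
  then have "gapF n (x / real n) = 0" for n
    by (cases "n = 0") (auto simp: gapF_def divide_neg_pos)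
  then show ?thesis
    using False by simp
qed

context iid_unif01
begin

lemma expectation_gapZ_powr_asymp_equiv:
  assumes "0 < a"
  shows "(\<lambda>m. expectation (\<lambda>\<omega>. gapZ X m \<omega> powr a))
    \<sim>[at_top] (\<lambda>m. Gamma (a + 1) * real m powr (- a))"
  using gap_moment_asymp_equiv[OF assms]
proof (rule asymp_equiv_transfer)
  show "eventually (\<lambda>m. gap_moment a m = expectation (\<lambda>\<omega>. gapZ X m \<omega> powr a)) at_top"
    using eventually_ge_at_top[of "1::nat"]
    by eventually_elim (use assms in \<open>simp add: expectation_gapZ_powr\<close>)
qed simp

lemma variance_gapZ_powr_asymp_equiv:
  assumes "0 < a"
  shows "(\<lambda>m. variance (\<lambda>\<omega>. gapZ X m \<omega> powr a))
    \<sim>[at_top] (\<lambda>m. (Gamma (2 * a + 1) - (Gamma (a + 1))\<^sup>2) * real m powr (- 2 * a))"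
  using gap_moment_variance_asymp_equiv[OF assms]
proof (rule asymp_equiv_transfer)
  show "eventually (\<lambda>m. gap_moment (2 * a) m - (gap_moment a m)\<^sup>2
      = variance (\<lambda>\<omega>. gapZ X m \<omega> powr a)) at_top"
    using eventually_ge_at_top[of "1::nat"]
    by eventually_elim (use assms in \<open>simp add: variance_gapZ_powr\<close>)
qed simp

lemma cdf_scaled_gapZ:
  assumes m: "1 \<le> m"
  shows "cdf (distr M borel (\<lambda>\<omega>. real m * gapZ X m \<omega>)) x = gapF m (x / real m)"
proof -
  note [measurable] = borel_measurable_gapZ[OF m]
  have "(\<lambda>\<omega>. real m * gapZ X m \<omega>) -` {..x} \<inter> space M
      = gapZ X m -` {..x / real m} \<inter> space M"
    using m by (auto simp: field_simps)
  then show ?thesis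
    using cdf_gapZ[OF m, of "x / real m"] by (simp add: cdf_def measure_distr)
qed

lemma weak_conv_scaled_gapZ:
  "weak_conv_m (\<lambda>m. distr M borel (\<lambda>\<omega>. real m * gapZ X m \<omega>))
     (density lborel (\<lambda>x. ennreal (exponential_density 1 x)))"
  unfolding weak_conv_m_def weak_conv_def cdf_exponential_density[OF zero_less_one]
proof (intro allI impI)
  fix x :: real
  let ?F = "\<lambda>m. cdf (distr M borel (\<lambda>\<omega>. real m * gapZ X m \<omega>)) x"
  have "eventually (\<lambda>m. gapF m (x / real m) = ?F m) sequentially"
    using eventually_ge_at_top[of "1::nat"] by eventually_elim (simp add: cdf_scaled_gapZ)
  then have "?F \<longlonglongrightarrow> (if 0 \<le> x then 1 - exp (- x) else 0)"
    by (rule Lim_transform_eventually[OF gapF_scaled_tendsto])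
  then show "?F \<longlonglongrightarrow> (if 0 \<le> x then 1 - exp (- 1 * x) else 0)"
    unfolding mult_minus1 .
qed

end

theorem lemma1:
  fixes M :: "'a measure" and X :: "nat \<Rightarrow> 'a \<Rightarrow> real"
  assumes "prob_space M"
    and "prob_space.indep_vars M (\<lambda>_. borel) X {1..}"
    and "\<And>i. i \<ge> 1 \<Longrightarrow> distr M lborel (X i) = uniform_measure lborel {0<..1}"
  shows
    "(\<forall>m\<ge>1. \<forall>t. cdf (distr M borel (gapZ X m)) t = gapF m t)
     \<and> (\<forall>m\<ge>1. \<forall>\<alpha>>0.
          prob_space.expectation M (\<lambda>\<omega>. gapZ X m \<omega> powr \<alpha>)
            = fact m * Gamma (1 + \<alpha>) / Gamma (1 + \<alpha> + real m)
        \<and> prob_space.variance M (\<lambda>\<omega>. gapZ X m \<omega> powr \<alpha>)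
            = fact m * Gamma (1 + 2 * \<alpha>) / Gamma (1 + 2 * \<alpha> + real m)
              - (fact m * Gamma (1 + \<alpha>) / Gamma (1 + \<alpha> + real m))\<^sup>2)
     \<and> (\<forall>m\<ge>1. prob_space.expectation M (gapZ X m) = 1 / (real m + 1)
        \<and> prob_space.variance M (gapZ X m) = real m / ((real m + 1)\<^sup>2 * (real m + 2)))
     \<and> (\<forall>\<alpha>>0.
          ((\<lambda>m. prob_space.expectation M (\<lambda>\<omega>. gapZ X m \<omega> powr \<alpha>))
            \<sim>[at_top] (\<lambda>m. Gamma (\<alpha> + 1) * real m powr (- \<alpha>)))
        \<and> ((\<lambda>m. prob_space.variance M (\<lambda>\<omega>. gapZ X m \<omega> powr \<alpha>))
            \<sim>[at_top] (\<lambda>m. (Gamma (2 * \<alpha> + 1) - (Gamma (\<alpha> + 1))\<^sup>2) * real m powr (- 2 * \<alpha>))))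
     \<and> weak_conv_m (\<lambda>m. distr M borel (\<lambda>\<omega>. real m * gapZ X m \<omega>))
         (density lborel (\<lambda>x. ennreal (exponential_density 1 x)))"
proof -
  interpret iid_unif01 M X
    using assms by (intro iid_unif01.intro iid_unif01_axioms.intro)
  show ?thesis
  proof (intro conjI allI impI)
    fix m :: nat and \<alpha> :: real
    assume m: "1 \<le> m" and "0 < \<alpha>"
    then have "-1 < \<alpha>" "-1/2 < \<alpha>"
      by simp_all
    then show "expectation (\<lambda>\<omega>. gapZ X m \<omega> powr \<alpha>) = fact m * Gamma (1 + \<alpha>) / Gamma (1 + \<alpha> + real m)"
      and "variance (\<lambda>\<omega>. gapZ X m \<omega> powr \<alpha>) = fact m * Gamma (1 + 2 * \<alpha>) / Gamma (1 + 2 * \<alpha> + real m)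
        - (fact m * Gamma (1 + \<alpha>) / Gamma (1 + \<alpha> + real m))\<^sup>2"
      using expectation_gapZ_powr[OF m] variance_gapZ_powr[OF m] unfolding gap_moment_def by blast+
  qed (rule cdf_gapZ expectation_gapZ variance_gapZ expectation_gapZ_powr_asymp_equiv
      variance_gapZ_powr_asymp_equiv weak_conv_scaled_gapZ; assumption)+
qed

end
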